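(* Let $F\leq F'\leq\hat F$ be permutation groups on $\Omega$. The following are equivalent: (i) $G(F,F')^+$ has index two in $G(F,F')$, i.e. $G(F,F')^+=G(F,F')^\star$; (ii) $G(F,F')^+$ has finite index in $G(F,F')$; (iii) $F$ is transitive on $\Omega$ and $F'$ is generated by its point stabilizers.
   Context: Standing notation. $\Omega$ is a finite set with $d=|\Omega|\geq 3$, $\mathcal{T}_d$ is the $d$-regular tree with vertex set $V$ and set $E$ of non-oriented edges. Fix a coloring $c:E\to\Omega$ such that for every vertex $v$ its restriction $c_v$ to the set $E(v)$ of edges containing $v$ is a bijection onto $\Omega$. For $g\in\mathrm{Aut}(\mathcal{T}_d)$ and $v\in V$, the local permutation is $\sigma(g,v)=c_{gv}\circ g_v\circ c_v^{-1}\in\mathrm{Sym}(\Omega)$, where $g_v:E(v)\to E(gv)$ is induced by $g$. For $F\leq\mathrm{Sym}(\Omega)$: $U(F)=\{g:\sigma(g,v)\in F \ \forall v\}$; $G(F)=\{g:\sigma(g,v)\in F \text{ for all but finitely many } v\}$; $\hat F$ is the subgroup of permutations preserving each $F$-orbit. For $F\leq F'\leq\hat F$, $G(F,F')=G(F)\cap U(F')$. For a group $G$ acting on a tree, $G^\star$ is the subgroup preserving the natural bipartition of the vertex set (vertices at even distance in the same class), and $G^+$ is the subgroup generated by the pointwise stabilizers $G_e$ of all edges $e$. *)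

theory Defs
  imports "HOL-Algebra.Algebra"
begin

text \<open>Colors: a finite type 'a (this is Omega, d = CARD('a)).
  Vertices of T_d: reduced words over 'a (no two consecutive letters equal).
  The edge between w and w@[a] has color a. Every vertex v has exactly one
  incident edge of each color, so this coloring is legal.\<close>

definition TV :: "'a list set" where
  "TV = {w. successively (\<noteq>) w}"

definition tadj :: "'a list \<Rightarrow> 'a list \<Rightarrow> bool" where
  "tadj u w \<longleftrightarrow> u \<in> TV \<and> w \<in> TV \<and> ((\<exists>a. w = u @ [a]) \<or> (\<exists>a. u = w @ [a]))"

definition nbr :: "'a list \<Rightarrow> 'a \<Rightarrow> 'a list" where
  "nbr v a = (if v \<noteq> [] \<and> last v = a then butlast v else v @ [a])"

definition ecol :: "'a list \<Rightarrow> 'a list \<Rightarrow> 'a" where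
  "ecol u w = (if length u < length w then last w else last u)"

definition TAut :: "('a list \<Rightarrow> 'a list) set" where
  "TAut = {g \<in> Bij TV. \<forall>u\<in>TV. \<forall>w\<in>TV. tadj (g u) (g w) \<longleftrightarrow> tadj u w}"

definition AutGroup_T :: "('a list \<Rightarrow> 'a list) monoid" where
  "AutGroup_T = (BijGroup TV) \<lparr>carrier := TAut\<rparr>"

text \<open>Local permutation sigma(g,v) = c_{gv} o g_v o c_v^{-1}.\<close>
definition locperm :: "('a list \<Rightarrow> 'a list) \<Rightarrow> 'a list \<Rightarrow> ('a \<Rightarrow> 'a)" where
  "locperm g v = (\<lambda>a. ecol (g v) (g (nbr v a)))"

definition U_grp :: "('a \<Rightarrow> 'a) set \<Rightarrow> ('a list \<Rightarrow> 'a list) set" where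
  "U_grp F = {g \<in> TAut. \<forall>v\<in>TV. locperm g v \<in> F}"

definition G_grp :: "('a \<Rightarrow> 'a) set \<Rightarrow> ('a list \<Rightarrow> 'a list) set" where
  "G_grp F = {g \<in> TAut. finite {v \<in> TV. locperm g v \<notin> F}}"

definition GFF :: "('a \<Rightarrow> 'a) set \<Rightarrow> ('a \<Rightarrow> 'a) set \<Rightarrow> ('a list \<Rightarrow> 'a list) set" where
  "GFF F F' = G_grp F \<inter> U_grp F'"

definition GFF_group :: "('a \<Rightarrow> 'a) set \<Rightarrow> ('a \<Rightarrow> 'a) set \<Rightarrow> ('a list \<Rightarrow> 'a list) monoid" where
  "GFF_group F F' = AutGroup_T \<lparr>carrier := GFF F F'\<rparr>"

definition plus_sub :: "('a list \<Rightarrow> 'a list) set \<Rightarrow> ('a list \<Rightarrow> 'a list) set" where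
  "plus_sub H = generate AutGroup_T
     (\<Union>{{g \<in> H. g u = u \<and> g w = w} | u w. tadj u w})"

text \<open>G^* : preserving the bipartition (class of v = parity of its distance
  to the root [], i.e. parity of length v).\<close>
definition star_sub :: "('a list \<Rightarrow> 'a list) set \<Rightarrow> ('a list \<Rightarrow> 'a list) set" where
  "star_sub H = {g \<in> H. \<forall>v\<in>TV. even (length (g v)) \<longleftrightarrow> even (length v)}"

abbreviation SymOmega :: "('a \<Rightarrow> 'a) monoid" where
  "SymOmega \<equiv> BijGroup (UNIV :: 'a set)"

definition orbit_of :: "('a \<Rightarrow> 'a) set \<Rightarrow> 'a \<Rightarrow> 'a set" where
  "orbit_of F x = (\<lambda>f. f x) ` F"

definition hat :: "('a \<Rightarrow> 'a) set \<Rightarrow> ('a \<Rightarrow> 'a) set" where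
  "hat F = {s \<in> carrier SymOmega. \<forall>x. s ` orbit_of F x = orbit_of F x}"

definition transitive_on_Omega :: "('a \<Rightarrow> 'a) set \<Rightarrow> bool" where
  "transitive_on_Omega F \<longleftrightarrow> (\<forall>x y. \<exists>f\<in>F. f x = y)"

definition gen_by_point_stabilizers :: "('a \<Rightarrow> 'a) set \<Rightarrow> bool" where
  "gen_by_point_stabilizers F \<longleftrightarrow> F = generate SymOmega (\<Union>x. {f \<in> F. f x = x})"

end

theory Submission
  imports Defs
begin

(*
  If F is transitive, every permutation in F' is the local permutation at the root of an element
  of G(F,F') fixing the root: choose, edge by edge, local permutations in F that are consistent
  along the tree. When F' is generated by point stabilizers, the extensions of the generators fix
  an edge, so all vertex stabilizers of G(F,F') lie in G(F,F')^+. Composing with a suitable vertex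
  stabilizer moves the image of the root two steps closer to the root, so every type-preserving
  element lies in G^+, and G^+ = G^* has index two.

  Otherwise the span P of the point stabilizers of F' is intransitive (for intransitive F because
  F' preserves the F-orbits). The local permutations of an edge stabilizer all lie in P, so G^+
  preserves the height function that folds the tree onto Z according to whether colours lie in a
  P-orbit A. The translations (tau_a tau_b)^n with a in A and b not in A move the root to height
  2n, hence lie in infinitely many cosets of G^+.
*)

lemma mem_TV_iff: "v \<in> TV \<longleftrightarrow> successively (\<noteq>) v"
  by (simp add: TV_def)

lemma Nil_in_TV: "[] \<in> TV"
  by (simp add: mem_TV_iff)

lemma snoc_in_TV_iff: "v @ [c] \<in> TV \<longleftrightarrow> v \<in> TV \<and> (v = [] \<or> last v \<noteq> c)"
  by (auto simp: mem_TV_iff successively_append_iff)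

lemma butlast_in_TV: "v \<in> TV \<Longrightarrow> butlast v \<in> TV"
  by (metis snoc_in_TV_iff append_butlast_last_id butlast.simps(1))

lemma nbr_snoc: "nbr (w @ [a]) a = w"
  by (simp add: nbr_def)

lemma nbr_eq_snoc: "v = [] \<or> last v \<noteq> a \<Longrightarrow> nbr v a = v @ [a]"
  by (auto simp: nbr_def)

lemma Nil_nbr: "nbr [] a = [a]"
  by (simp add: nbr_def)

lemma nbr_in_TV: "v \<in> TV \<Longrightarrow> nbr v a \<in> TV"
  by (auto simp: nbr_def butlast_in_TV snoc_in_TV_iff)

lemma nbr_cases:
  obtains w where "v = w @ [a]" "nbr v a = w" | "v = [] \<or> last v \<noteq> a" "nbr v a = v @ [a]"
  by (metis append_butlast_last_id nbr_eq_snoc nbr_snoc)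

lemma nbr_nbr: "v \<in> TV \<Longrightarrow> nbr (nbr v a) a = v"
  by (cases v a rule: nbr_cases) (auto simp: snoc_in_TV_iff nbr_eq_snoc nbr_snoc)

lemma ecol_nbr: "ecol v (nbr v a) = a"
  by (cases v a rule: nbr_cases) (auto simp: ecol_def)

lemma nbr_inj: "nbr v a = nbr v b \<Longrightarrow> a = b"
  by (metis ecol_nbr)

lemma even_length_nbr: "even (length (nbr v a)) \<longleftrightarrow> odd (length v)"
  by (cases v a rule: nbr_cases) auto

lemma tadj_iff_nbr: "tadj u w \<longleftrightarrow> u \<in> TV \<and> w \<in> TV \<and> (\<exists>a. w = nbr u a)"
proof -
  have "(\<exists>a. w = u @ [a]) \<or> (\<exists>a. u = w @ [a]) \<longleftrightarrow> (\<exists>a. w = nbr u a)" if "w \<in> TV"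
  proof
    assume "(\<exists>a. w = u @ [a]) \<or> (\<exists>a. u = w @ [a])"
    then show "\<exists>a. w = nbr u a"
      using \<open>w \<in> TV\<close> by (metis nbr_eq_snoc nbr_snoc snoc_in_TV_iff)
  next
    assume "\<exists>a. w = nbr u a"
    then obtain a where "w = nbr u a" ..
    then show "(\<exists>a. w = u @ [a]) \<or> (\<exists>a. u = w @ [a])"
      by (cases u a rule: nbr_cases) auto
  qed
  then show ?thesis
    unfolding tadj_def by blast
qed

lemma tadj_nbr: "v \<in> TV \<Longrightarrow> tadj v (nbr v a)"
  by (metis tadj_iff_nbr nbr_in_TV)

lemma nbr_ecol: "tadj u w \<Longrightarrow> nbr u (ecol u w) = w"
  by (metis tadj_iff_nbr ecol_nbr)

lemma ecol_commute: "tadj u w \<Longrightarrow> ecol u w = ecol w u"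
  by (metis ecol_nbr nbr_nbr tadj_iff_nbr)

lemma TV_induct:
  assumes "u \<in> TV" "v \<in> TV" and base: "P u"
    and step: "\<And>v a. v \<in> TV \<Longrightarrow> P v \<Longrightarrow> P (nbr v a)"
  shows "P v"
proof -
  have "P []" if "w \<in> TV" "P w" for w
    using that
  proof (induction w rule: rev_induct)
    case (snoc c w)
    have "w \<in> TV"
      using snoc.prems(1) by (simp add: snoc_in_TV_iff)
    moreover have "P w"
      using step[OF snoc.prems, of c] by (simp only: nbr_snoc)
    ultimately show ?case
      by (rule snoc.IH)
  qed
  note root = this[OF assms(1) base]
  show "P v"
    using \<open>v \<in> TV\<close>
  proof (induction v rule: rev_induct)
    case (snoc c v)
    have v: "v \<in> TV" and "v = [] \<or> last v \<noteq> c"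
      using snoc.prems by (simp_all only: snoc_in_TV_iff)
    from this(2) have "nbr v c = v @ [c]"
      by (rule nbr_eq_snoc)
    with step[OF v snoc.IH[OF v], of c] show ?case
      by simp
  qed (rule root)
qed

lemma TAut_bij_betw: "g \<in> TAut \<Longrightarrow> bij_betw g TV TV"
  by (simp add: TAut_def Bij_def)

lemma TAut_in_TV: "g \<in> TAut \<Longrightarrow> v \<in> TV \<Longrightarrow> g v \<in> TV"
  by (meson TAut_bij_betw bij_betwE)

lemma TAut_tadj_iff: "g \<in> TAut \<Longrightarrow> u \<in> TV \<Longrightarrow> w \<in> TV \<Longrightarrow> tadj (g u) (g w) \<longleftrightarrow> tadj u w"
  by (simp add: TAut_def)

lemma TAut_nbr: "g \<in> TAut \<Longrightarrow> v \<in> TV \<Longrightarrow> g (nbr v a) = nbr (g v) (locperm g v a)"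
  unfolding locperm_def by (metis TAut_tadj_iff nbr_ecol nbr_in_TV tadj_nbr)

lemma bij_locperm:
  fixes g :: "'a::finite list \<Rightarrow> 'a list"
  assumes "g \<in> TAut" "v \<in> TV"
  shows "bij (locperm g v)"
proof -
  have "inj (locperm g v)"
  proof (rule injI)
    fix a b
    assume "locperm g v a = locperm g v b"
    then have "g (nbr v a) = g (nbr v b)"
      using TAut_nbr[OF assms] by metis
    then show "a = b"
      using TAut_bij_betw[OF assms(1)] nbr_in_TV[OF assms(2)] nbr_inj
      by (metis bij_betw_imp_inj_on inj_onD)
  qed
  then show ?thesis
    by (simp add: bij_def finite_UNIV_inj_surj)
qed

lemma locperm_restrict_id: "v \<in> TV \<Longrightarrow> locperm (\<lambda>x\<in>TV. x) v = id"
  by (simp add: locperm_def fun_eq_iff nbr_in_TV ecol_nbr)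

lemma restrict_id_TAut: "(\<lambda>x\<in>TV. x) \<in> TAut"
  unfolding TAut_def using id_Bij by auto

lemma compose_TAut:
  assumes "g \<in> TAut" "h \<in> TAut"
  shows "compose TV g h \<in> TAut"
proof -
  have "compose TV g h \<in> Bij TV"
    using assms by (intro compose_Bij) (simp_all add: TAut_def)
  moreover have "tadj (compose TV g h u) (compose TV g h w) \<longleftrightarrow> tadj u w" if "u \<in> TV" "w \<in> TV" for u w
    using that assms by (simp add: compose_def TAut_in_TV TAut_tadj_iff)
  ultimately show ?thesis
    by (simp add: TAut_def)
qed

lemma restrict_inv_into_TAut:
  assumes "g \<in> TAut"
  shows "restrict (inv_into TV g) TV \<in> TAut"
proof -
  let ?h = "restrict (inv_into TV g) TV"
  have h: "?h \<in> Bij TV" "\<And>v. v \<in> TV \<Longrightarrow> ?h v \<in> TV" "\<And>v. v \<in> TV \<Longrightarrow> g (?h v) = v"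
    using assms TAut_bij_betw[OF assms] restrict_inv_into_Bij[of g TV]
    by (auto simp: TAut_def Bij_def bij_betw_def f_inv_into_f inv_into_into)
  have "tadj (?h u) (?h w) \<longleftrightarrow> tadj u w" if "u \<in> TV" "w \<in> TV" for u w
    using TAut_tadj_iff[OF assms h(2)[OF that(1)] h(2)[OF that(2)]] h(3) that by simp
  with h(1) show ?thesis
    by (simp add: TAut_def)
qed

lemma TAut_subgroup: "subgroup (TAut :: ('a list \<Rightarrow> 'a list) set) (BijGroup TV)"
proof (rule group.subgroupI[OF group_BijGroup])
  show "TAut \<subseteq> carrier (BijGroup TV)"
    by (auto simp: BijGroup_def TAut_def)
  show "TAut \<noteq> {}"
    using restrict_id_TAut by blast
  fix g h :: "'a list \<Rightarrow> 'a list"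
  assume g: "g \<in> TAut" and h: "h \<in> TAut"
  have "g \<in> Bij TV"
    using g by (simp add: TAut_def)
  then show "inv\<^bsub>BijGroup TV\<^esub> g \<in> TAut"
    using restrict_inv_into_TAut[OF g] by (simp add: inv_BijGroup)
  show "g \<otimes>\<^bsub>BijGroup TV\<^esub> h \<in> TAut"
    using g h compose_TAut by (simp add: BijGroup_def TAut_def)
qed

interpretation Aut: group AutGroup_T
  unfolding AutGroup_T_def by (rule group.subgroup_imp_group[OF group_BijGroup TAut_subgroup])

abbreviation aut_mult :: "('a list \<Rightarrow> 'a list) \<Rightarrow> ('a list \<Rightarrow> 'a list) \<Rightarrow> 'a list \<Rightarrow> 'a list"
    (infixl "\<star>" 70)
  where "g \<star> h \<equiv> g \<otimes>\<^bsub>AutGroup_T\<^esub> h"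

abbreviation tinv :: "('a list \<Rightarrow> 'a list) \<Rightarrow> 'a list \<Rightarrow> 'a list"
  where "tinv g \<equiv> inv\<^bsub>AutGroup_T\<^esub> g"

lemma carrier_Aut [simp]: "carrier AutGroup_T = TAut"
  by (simp add: AutGroup_T_def)

lemma subgroup_Aut_TAut: "subgroup K AutGroup_T \<Longrightarrow> k \<in> K \<Longrightarrow> k \<in> TAut"
  using subgroup.subset by fastforce

lemma one_TAut [simp]: "\<one>\<^bsub>AutGroup_T\<^esub> \<in> TAut"
  using Aut.one_closed by simp

lemma tinv_TAut [simp]: "g \<in> TAut \<Longrightarrow> tinv g \<in> TAut"
  by (metis Aut.inv_closed carrier_Aut)

lemma Aut_mult_TAut [simp]: "g \<in> TAut \<Longrightarrow> h \<in> TAut \<Longrightarrow> g \<star> h \<in> TAut"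
  by (metis Aut.m_closed carrier_Aut)

lemma one_Aut: "\<one>\<^bsub>AutGroup_T\<^esub> = (\<lambda>x\<in>TV. x)"
  by (simp add: AutGroup_T_def BijGroup_def)

lemma one_Aut_apply: "v \<in> TV \<Longrightarrow> \<one>\<^bsub>AutGroup_T\<^esub> v = v"
  by (simp add: one_Aut)

lemma Aut_mult_apply: "g \<in> TAut \<Longrightarrow> h \<in> TAut \<Longrightarrow> v \<in> TV \<Longrightarrow> (g \<star> h) v = g (h v)"
  by (simp add: AutGroup_T_def BijGroup_def TAut_def compose_def)

lemma Aut_inv_in_TV: "g \<in> TAut \<Longrightarrow> v \<in> TV \<Longrightarrow> tinv g v \<in> TV"
  by (simp add: TAut_in_TV)

lemma Aut_apply_inv: "g \<in> TAut \<Longrightarrow> v \<in> TV \<Longrightarrow> g (tinv g v) = v"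
  by (metis Aut.inv_closed Aut.r_inv Aut_mult_apply carrier_Aut one_Aut_apply)

lemma Aut_inv_apply: "g \<in> TAut \<Longrightarrow> v \<in> TV \<Longrightarrow> tinv g (g v) = v"
  by (metis Aut.inv_closed Aut.l_inv Aut_mult_apply carrier_Aut one_Aut_apply)

lemma locperm_one: "v \<in> TV \<Longrightarrow> locperm \<one>\<^bsub>AutGroup_T\<^esub> v = id"
  by (simp add: one_Aut locperm_restrict_id)

lemma locperm_mult:
  assumes "g \<in> TAut" "h \<in> TAut" "v \<in> TV"
  shows "locperm (g \<star> h) v = locperm g (h v) \<circ> locperm h v"
proof
  fix a
  have "(g \<star> h) (nbr v a) = g (nbr (h v) (locperm h v a))"
    using assms TAut_nbr[OF assms(2,3)] by (simp add: Aut_mult_apply nbr_in_TV)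
  then show "locperm (g \<star> h) v a = (locperm g (h v) \<circ> locperm h v) a"
    using assms by (simp add: locperm_def Aut_mult_apply)
qed

lemma locperm_inv:
  fixes g :: "'a::finite list \<Rightarrow> 'a list"
  assumes "g \<in> TAut" "v \<in> TV"
  shows "locperm (tinv g) v = inv_into UNIV (locperm g (tinv g v))"
proof -
  have "locperm g (tinv g v) \<circ> locperm (tinv g) v = locperm (g \<star> tinv g) v"
    using locperm_mult[of g "tinv g" v] assms by simp
  also have "\<dots> = id"
    using assms by (simp add: locperm_one)
  finally show ?thesis
    using bij_locperm[OF assms(1) Aut_inv_in_TV[OF assms]]
    by (metis bij_is_inj comp_assoc comp_id id_comp inv_o_cancel)
qed

lemma even_length_aut:
  assumes g: "g \<in> TAut" and v: "v \<in> TV"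
  shows "even (length (g v)) \<longleftrightarrow> (even (length v) \<longleftrightarrow> even (length (g [])))"
  using Nil_in_TV v
proof (rule TV_induct)
  fix v a
  assume "v \<in> TV" "even (length (g v)) \<longleftrightarrow> (even (length v) \<longleftrightarrow> even (length (g [])))"
  then show "even (length (g (nbr v a))) \<longleftrightarrow> (even (length (nbr v a)) \<longleftrightarrow> even (length (g [])))"
    by (simp add: TAut_nbr[OF g] even_length_nbr) blast
qed simp

lemma even_length_aut_fixpoint:
  assumes "g \<in> TAut" "u \<in> TV" "g u = u" "v \<in> TV"
  shows "even (length (g v)) \<longleftrightarrow> even (length v)"
  using even_length_aut[OF assms(1,2)] even_length_aut[OF assms(1,4)] assms(3) by simp blast

lemma locperm_nbr_colour: "g \<in> TAut \<Longrightarrow> v \<in> TV \<Longrightarrow> locperm g (nbr v c) c = locperm g v c"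
  unfolding locperm_def
  by (metis nbr_nbr nbr_in_TV ecol_commute TAut_tadj_iff tadj_nbr)

lemma carrier_SymOmega: "f \<in> carrier SymOmega \<longleftrightarrow> bij f"
  by (simp add: BijGroup_def Bij_def)

lemma mult_SymOmega: "bij f \<Longrightarrow> bij g \<Longrightarrow> f \<otimes>\<^bsub>SymOmega\<^esub> g = f \<circ> g"
  by (auto simp: BijGroup_def Bij_def compose_def fun_eq_iff)

lemma one_SymOmega: "\<one>\<^bsub>SymOmega\<^esub> = id"
  by (auto simp: BijGroup_def fun_eq_iff)

lemma inv_SymOmega: "bij f \<Longrightarrow> inv\<^bsub>SymOmega\<^esub> f = inv_into UNIV f"
  using inv_BijGroup[of f UNIV] by (simp add: Bij_def fun_eq_iff)

interpretation Sym: group "SymOmega :: ('a \<Rightarrow> 'a) monoid"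
  by (rule group_BijGroup)

context
  fixes F :: "('a \<Rightarrow> 'a) set"
  assumes F: "subgroup F SymOmega"
begin

lemma perm_subgroup_bij: "f \<in> F \<Longrightarrow> bij f"
  using subgroup.subset[OF F] carrier_SymOmega by blast

lemma perm_subgroup_id: "id \<in> F"
  using subgroup.one_closed[OF F] by (simp add: one_SymOmega)

lemma perm_subgroup_comp: "f \<in> F \<Longrightarrow> g \<in> F \<Longrightarrow> f \<circ> g \<in> F"
  using subgroup.m_closed[OF F] by (metis mult_SymOmega perm_subgroup_bij)

lemma perm_subgroup_inv: "f \<in> F \<Longrightarrow> inv_into UNIV f \<in> F"
  using subgroup.m_inv_closed[OF F] by (metis inv_SymOmega perm_subgroup_bij)

end

lemma root_locperms_subgroup:
  fixes K :: "('a::finite list \<Rightarrow> 'a list) set"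
  assumes K: "subgroup K AutGroup_T"
  shows "subgroup {locperm k [] | k. k \<in> K \<and> k [] = []} SymOmega" (is "subgroup ?R _")
proof (rule Sym.subgroupI)
  show "?R \<subseteq> carrier SymOmega"
    by (auto simp: carrier_SymOmega intro!: bij_locperm subgroup_Aut_TAut[OF K] Nil_in_TV)
  show "?R \<noteq> {}"
    using subgroup.one_closed[OF K] one_Aut_apply[OF Nil_in_TV] by auto
next
  fix f
  assume "f \<in> ?R"
  then obtain k where k: "k \<in> K" "k [] = []" "f = locperm k []"
    by auto
  then have kT: "k \<in> TAut" and k_inv: "tinv k [] = []"
    using subgroup_Aut_TAut[OF K] Aut_inv_apply Nil_in_TV by metis+
  then have "inv\<^bsub>SymOmega\<^esub> f = locperm (tinv k) []"
    using k bij_locperm[OF kT Nil_in_TV] by (simp add: inv_SymOmega locperm_inv Nil_in_TV)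
  with k k_inv show "inv\<^bsub>SymOmega\<^esub> f \<in> ?R"
    using subgroup.m_inv_closed[OF K] by auto
next
  fix f g
  assume "f \<in> ?R" "g \<in> ?R"
  then obtain k l where kl: "k \<in> K" "k [] = []" "f = locperm k []" "l \<in> K" "l [] = []" "g = locperm l []"
    by auto
  then have klT: "k \<in> TAut" "l \<in> TAut"
    using subgroup_Aut_TAut[OF K] by blast+
  then have "f \<otimes>\<^bsub>SymOmega\<^esub> g = locperm (k \<star> l) []" "(k \<star> l) [] = []"
    using kl bij_locperm[OF klT(1) Nil_in_TV] bij_locperm[OF klT(2) Nil_in_TV]
    by (simp_all add: mult_SymOmega locperm_mult Aut_mult_apply Nil_in_TV)
  then show "f \<otimes>\<^bsub>SymOmega\<^esub> g \<in> ?R"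
    using kl subgroup.m_closed[OF K] by auto
qed

section \<open>The groups \<open>G(F,F')\<close> and \<open>G(F,F')\<^sup>+\<close>\<close>

definition defects :: "('a \<Rightarrow> 'a) set \<Rightarrow> ('a list \<Rightarrow> 'a list) \<Rightarrow> 'a list set" where
  "defects F g = {v \<in> TV. locperm g v \<notin> F}"

lemma GFF_iff:
  "g \<in> GFF F F' \<longleftrightarrow> g \<in> TAut \<and> (\<forall>v\<in>TV. locperm g v \<in> F') \<and> finite (defects F g)"
  by (auto simp: GFF_def G_grp_def U_grp_def defects_def)

lemma defects_tinv:
  fixes F :: "('a::finite \<Rightarrow> 'a) set"
  assumes F: "subgroup F SymOmega" and g: "g \<in> TAut"
  shows "defects F (tinv g) \<subseteq> g ` defects F g"
proof
  fix v
  assume "v \<in> defects F (tinv g)"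
  then have "v \<in> TV" "locperm g (tinv g v) \<notin> F"
    using locperm_inv[OF g] perm_subgroup_inv[OF F] by (auto simp: defects_def)
  then show "v \<in> g ` defects F g"
    using g by (auto simp: defects_def Aut_apply_inv Aut_inv_in_TV intro!: image_eqI[of v g "tinv g v"])
qed

lemma defects_mult:
  fixes F :: "('a::finite \<Rightarrow> 'a) set"
  assumes F: "subgroup F SymOmega" and gh: "g \<in> TAut" "h \<in> TAut"
  shows "defects F (g \<star> h) \<subseteq> defects F h \<union> tinv h ` defects F g"
proof
  fix v
  assume v: "v \<in> defects F (g \<star> h)"
  then have "locperm h v \<notin> F \<or> locperm g (h v) \<notin> F"
    using locperm_mult[OF gh] perm_subgroup_comp[OF F] by (auto simp: defects_def)
  then show "v \<in> defects F h \<union> tinv h ` defects F g"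
    using v gh(2) by (auto simp: defects_def Aut_inv_apply TAut_in_TV intro!: image_eqI[of v "tinv h" "h v"])
qed

lemma GFF_subgroup:
  fixes F F' :: "('a::finite \<Rightarrow> 'a) set"
  assumes F: "subgroup F SymOmega" and F': "subgroup F' SymOmega"
  shows "subgroup (GFF F F') AutGroup_T"
proof (rule Aut.subgroupI)
  show "GFF F F' \<subseteq> carrier AutGroup_T"
    by (auto simp: GFF_iff)
  have "\<one>\<^bsub>AutGroup_T\<^esub> \<in> GFF F F'"
    using perm_subgroup_id[OF F] perm_subgroup_id[OF F']
    by (simp add: GFF_iff defects_def locperm_one cong: conj_cong)
  then show "GFF F F' \<noteq> {}"
    by blast
next
  fix g h
  assume "g \<in> GFF F F'" "h \<in> GFF F F'"
  then have g: "g \<in> TAut" "\<And>v. v \<in> TV \<Longrightarrow> locperm g v \<in> F'" "finite (defects F g)"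
    and h: "h \<in> TAut" "\<And>v. v \<in> TV \<Longrightarrow> locperm h v \<in> F'" "finite (defects F h)"
    by (simp_all add: GFF_iff)
  show "tinv g \<in> GFF F F'"
    using g locperm_inv[OF g(1)] perm_subgroup_inv[OF F'] Aut_inv_in_TV[OF g(1)]
      finite_subset[OF defects_tinv[OF F g(1)]]
    by (simp add: GFF_iff)
  show "g \<star> h \<in> GFF F F'"
    using g h locperm_mult[OF g(1) h(1)] perm_subgroup_comp[OF F'] TAut_in_TV[OF h(1)]
      finite_subset[OF defects_mult[OF F g(1) h(1)]]
    by (simp add: GFF_iff)
qed

lemma rcosets_GFF_group:
  "rcosets\<^bsub>GFF_group F F'\<^esub> H = (\<lambda>g. H #>\<^bsub>AutGroup_T\<^esub> g) ` GFF F F'"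
  by (auto simp: RCOSETS_def GFF_group_def r_coset_def)

definition edge_stabilizers :: "('a list \<Rightarrow> 'a list) set \<Rightarrow> ('a list \<Rightarrow> 'a list) set" where
  "edge_stabilizers H = {g \<in> H. \<exists>u w. tadj u w \<and> g u = u \<and> g w = w}"

lemma plus_sub_eq_generate: "plus_sub H = generate AutGroup_T (edge_stabilizers H)"
proof -
  have "\<Union>{{g \<in> H. g u = u \<and> g w = w} | u w. tadj u w} = edge_stabilizers H"
    by (auto simp: edge_stabilizers_def)
  then show ?thesis
    by (simp add: plus_sub_def)
qed

lemma edge_stabilizer_in_plus_sub: "g \<in> H \<Longrightarrow> tadj u w \<Longrightarrow> g u = u \<Longrightarrow> g w = w \<Longrightarrow> g \<in> plus_sub H"
  unfolding plus_sub_eq_generate edge_stabilizers_def by (rule generate.incl) blast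

lemma plus_sub_subgroup: "H \<subseteq> TAut \<Longrightarrow> subgroup (plus_sub H) AutGroup_T"
  unfolding plus_sub_eq_generate
  by (rule Aut.generate_is_subgroup) (auto simp: edge_stabilizers_def)

lemma plus_sub_subset: "subgroup H AutGroup_T \<Longrightarrow> plus_sub H \<subseteq> H"
  unfolding plus_sub_eq_generate
  by (rule Aut.generate_subgroup_incl) (auto simp: edge_stabilizers_def)

lemma plus_sub_preserves:
  assumes H: "H \<subseteq> TAut"
    and edge: "\<And>g v. g \<in> edge_stabilizers H \<Longrightarrow> v \<in> TV \<Longrightarrow> \<phi> (g v) = \<phi> v"
    and g: "g \<in> plus_sub H" and v: "v \<in> TV"
  shows "\<phi> (g v) = \<phi> v"
proof -
  have "g \<in> TAut \<and> (\<forall>v\<in>TV. \<phi> (g v) = \<phi> v)"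
    using g unfolding plus_sub_eq_generate
  proof (induction g rule: generate.induct)
    case one
    then show ?case
      by (simp add: one_Aut_apply)
  next
    case (incl g)
    then show ?case
      using H edge by (auto simp: edge_stabilizers_def)
  next
    case (inv g)
    then have "g \<in> TAut" "\<forall>v\<in>TV. \<phi> (g v) = \<phi> v"
      using H edge by (auto simp: edge_stabilizers_def)
    then show ?case
      by (metis Aut_apply_inv Aut_inv_in_TV tinv_TAut)
  next
    case (eng g h)
    then show ?case
      by (simp add: Aut_mult_apply TAut_in_TV)
  qed
  then show ?thesis
    using v by blast
qed

lemma plus_sub_conj:
  assumes H: "subgroup H AutGroup_T" and t: "t \<in> H" and g: "g \<in> plus_sub H"
  shows "t \<star> g \<star> tinv t \<in> plus_sub H"
proof -
  interpret H: group "AutGroup_T\<lparr>carrier := H\<rparr>"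
    by (rule Aut.subgroup_imp_group[OF H])
  have HT: "H \<subseteq> TAut"
    using subgroup.subset[OF H] by simp
  have tinv_H: "inv\<^bsub>AutGroup_T\<lparr>carrier := H\<rparr>\<^esub> x = tinv x" if "x \<in> H" for x
    using Aut.m_inv_consistent[OF H that] .
  have gen: "plus_sub H = generate (AutGroup_T\<lparr>carrier := H\<rparr>) (edge_stabilizers H)"
    unfolding plus_sub_eq_generate
    by (rule Aut.generate_consistent[symmetric]) (auto simp: edge_stabilizers_def H)
  have "plus_sub H \<lhd> AutGroup_T\<lparr>carrier := H\<rparr>"
    unfolding gen
  proof (rule H.normal_generateI)
    show "edge_stabilizers H \<subseteq> carrier (AutGroup_T\<lparr>carrier := H\<rparr>)"
      by (auto simp: edge_stabilizers_def)
    fix h s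
    assume h: "h \<in> edge_stabilizers H" and s: "s \<in> carrier (AutGroup_T\<lparr>carrier := H\<rparr>)"
    then obtain u w where uw: "h \<in> H" "tadj u w" "h u = u" "h w = w"
      by (auto simp: edge_stabilizers_def)
    have sh: "s \<in> TAut" "h \<in> TAut" "s \<in> H"
      using s uw HT by auto
    have uwTV: "u \<in> TV" "w \<in> TV"
      using uw(2) by (simp_all add: tadj_def)
    have fixes_conj: "(s \<star> h \<star> tinv s) (s x) = s x" if "x \<in> TV" "h x = x" for x
      using that sh by (simp add: Aut_mult_apply Aut_inv_apply TAut_in_TV)
    have "s \<star> h \<star> tinv s \<in> H"
      using H sh uw(1) by (simp add: subgroup.m_closed subgroup.m_inv_closed)
    moreover have "tadj (s u) (s w)"
      using TAut_tadj_iff[OF sh(1) uwTV] uw(2) by simp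
    ultimately show "s \<otimes>\<^bsub>AutGroup_T\<lparr>carrier := H\<rparr>\<^esub> h \<otimes>\<^bsub>AutGroup_T\<lparr>carrier := H\<rparr>\<^esub> inv\<^bsub>AutGroup_T\<lparr>carrier := H\<rparr>\<^esub> s
        \<in> edge_stabilizers H"
      using fixes_conj[OF uwTV(1) uw(3)] fixes_conj[OF uwTV(2) uw(4)] tinv_H[OF sh(3)]
      by (auto simp: edge_stabilizers_def)
  qed
  then show ?thesis
    using normal.inv_op_closed2[of "plus_sub H" "AutGroup_T\<lparr>carrier := H\<rparr>" t g] t g tinv_H[OF t]
    by simp
qed

lemma plus_sub_even_length:
  assumes "H \<subseteq> TAut" "h \<in> plus_sub H" "v \<in> TV"
  shows "even (length (h v)) \<longleftrightarrow> even (length v)"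
proof -
  have "even (length (g v)) \<longleftrightarrow> even (length v)" if "g \<in> edge_stabilizers H" "v \<in> TV" for g v
    using that assms(1) even_length_aut_fixpoint by (auto simp: edge_stabilizers_def tadj_def)
  from plus_sub_preserves[OF assms(1) this assms(2,3)] show ?thesis .
qed

text \<open>\<open>flip_word c\<close> exchanges the two sides of the root edge of colour \<open>c\<close>.\<close>

definition flip_word :: "'a \<Rightarrow> 'a list \<Rightarrow> 'a list" where
  "flip_word c v = (if v \<noteq> [] \<and> hd v = c then tl v else c # v)"

definition edge_flip :: "'a \<Rightarrow> 'a list \<Rightarrow> 'a list" where
  "edge_flip c = restrict (flip_word c) TV"

lemma flip_word_in_TV: "v \<in> TV \<Longrightarrow> flip_word c v \<in> TV"
  by (cases v) (auto simp: flip_word_def mem_TV_iff successively_Cons elim: successively.elims)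

lemma flip_word_flip_word: "v \<in> TV \<Longrightarrow> flip_word c (flip_word c v) = v"
  by (cases v) (auto simp: flip_word_def mem_TV_iff elim: successively.elims)

lemma flip_word_nbr: "v \<in> TV \<Longrightarrow> flip_word c (nbr v a) = nbr (flip_word c v) a"
  by (cases v rule: rev_cases; cases v)
    (auto simp: flip_word_def nbr_def mem_TV_iff successively_append_iff butlast_append
      elim: successively.elims)

lemma edge_flip_TAut: "edge_flip c \<in> TAut"
proof -
  have "bij_betw (flip_word c) TV TV"
    by (rule bij_betw_byWitness[where f' = "flip_word c"]) (auto simp: flip_word_flip_word flip_word_in_TV)
  then have "edge_flip c \<in> Bij TV"
    by (simp add: Bij_def edge_flip_def bij_betw_cong[of TV "restrict (flip_word c) TV" "flip_word c"])
  moreover have "tadj (flip_word c u) (flip_word c w) \<longleftrightarrow> tadj u w" if "u \<in> TV" "w \<in> TV" for u w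
    using that by (metis tadj_iff_nbr flip_word_nbr flip_word_flip_word flip_word_in_TV)
  ultimately show ?thesis
    by (simp add: TAut_def edge_flip_def)
qed

lemma edge_flip_apply: "v \<in> TV \<Longrightarrow> edge_flip c v = flip_word c v"
  by (simp add: edge_flip_def)

lemma edge_flip_Nil: "edge_flip c [] = [c]"
  by (simp add: edge_flip_apply flip_word_def Nil_in_TV)

definition colour_preserving :: "('a list \<Rightarrow> 'a list) set" where
  "colour_preserving = {t \<in> TAut. \<forall>v\<in>TV. locperm t v = id}"

lemma colour_preserving_TAut: "t \<in> colour_preserving \<Longrightarrow> t \<in> TAut"
  by (simp add: colour_preserving_def)

lemma colour_preserving_locperm: "t \<in> colour_preserving \<Longrightarrow> v \<in> TV \<Longrightarrow> locperm t v = id"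
  by (simp add: colour_preserving_def)

lemma edge_flip_colour_preserving: "edge_flip c \<in> colour_preserving"
proof -
  have "locperm (edge_flip c) v a = a" if "v \<in> TV" for v a
    using that by (simp add: locperm_def edge_flip_apply nbr_in_TV flip_word_nbr ecol_nbr)
  then show ?thesis
    by (simp add: colour_preserving_def edge_flip_TAut fun_eq_iff)
qed

lemma colour_preserving_mult:
  "s \<in> colour_preserving \<Longrightarrow> t \<in> colour_preserving \<Longrightarrow> s \<star> t \<in> colour_preserving"
  by (simp add: colour_preserving_def locperm_mult TAut_in_TV)

lemma colour_preserving_GFF:
  "t \<in> colour_preserving \<Longrightarrow> id \<in> F \<Longrightarrow> id \<in> F' \<Longrightarrow> t \<in> GFF F F'"
  by (simp add: colour_preserving_def GFF_iff defects_def cong: conj_cong)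

lemma colour_preserving_moves_root: "v \<in> TV \<Longrightarrow> \<exists>t\<in>colour_preserving. t [] = v"
proof (induction v)
  case Nil
  have "\<one>\<^bsub>AutGroup_T\<^esub> \<in> colour_preserving"
    by (simp add: colour_preserving_def locperm_one)
  then show ?case
    using one_Aut_apply[OF Nil_in_TV] by blast
next
  case (Cons c v)
  then have v: "v \<in> TV" and "v = [] \<or> hd v \<noteq> c"
    by (auto simp: mem_TV_iff elim: successively.elims)
  then have "flip_word c v = c # v"
    unfolding flip_word_def by (intro if_not_P) blast
  obtain t where t: "t \<in> colour_preserving" "t [] = v"
    using Cons.IH v by blast
  have "(edge_flip c \<star> t) [] = c # v"
    using t v \<open>flip_word c v = c # v\<close>
    by (simp add: colour_preserving_def Aut_mult_apply edge_flip_TAut Nil_in_TV edge_flip_apply)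
  moreover have "edge_flip c \<star> t \<in> colour_preserving"
    using colour_preserving_mult[OF edge_flip_colour_preserving t(1)] .
  ultimately show ?case
    by blast
qed

section \<open>Automorphisms with prescribed local permutations\<close>

definition relabel :: "('a list \<Rightarrow> 'a \<Rightarrow> 'a) \<Rightarrow> 'a list \<Rightarrow> 'a list" where
  "relabel L v = map (\<lambda>i. L (take i v) (v ! i)) [0..<length v]"

lemma relabel_Nil: "relabel L [] = []"
  by (simp add: relabel_def)

lemma relabel_snoc: "relabel L (v @ [c]) = relabel L v @ [L v c]"
  by (simp add: relabel_def nth_append)

lemma length_relabel: "length (relabel L v) = length v"
  by (simp add: relabel_def)

text \<open>Agreement of the labels at both ends of an edge on its colour is exactly what makes
  \<open>relabel L\<close> an automorphism with local permutation \<open>L v\<close> at every vertex \<open>v\<close>.\<close>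

locale consistent_labelling =
  fixes L :: "'a::finite list \<Rightarrow> 'a \<Rightarrow> 'a"
  assumes bij_label: "\<And>v. bij (L v)"
    and label_snoc: "\<And>v c. L (v @ [c]) c = L v c"
begin

lemma label_inj: "L v a = L v b \<Longrightarrow> a = b"
  using bij_label by (metis bij_is_inj injD)

lemma last_relabel: "v \<noteq> [] \<Longrightarrow> last (relabel L v) = L v (last v)"
  by (metis append_butlast_last_id label_snoc last_snoc relabel_snoc)

lemma relabel_nbr: "v \<in> TV \<Longrightarrow> relabel L (nbr v a) = nbr (relabel L v) (L v a)"
proof (cases v a rule: nbr_cases)
  case (1 w)
  then show ?thesis
    by (simp add: relabel_snoc nbr_snoc label_snoc)
next
  case 2
  then have "relabel L v = [] \<or> last (relabel L v) \<noteq> L v a"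
    by (metis label_inj last_relabel length_0_conv length_relabel)
  then show ?thesis
    using 2 by (simp add: relabel_snoc nbr_eq_snoc)
qed

lemma relabel_in_TV: "v \<in> TV \<Longrightarrow> relabel L v \<in> TV"
proof (induction v rule: rev_induct)
  case (snoc c v)
  then have "v \<in> TV" "v = [] \<or> last v \<noteq> c"
    by (simp_all add: snoc_in_TV_iff)
  then show ?case
    using snoc.IH by (metis label_inj last_relabel relabel_snoc snoc_in_TV_iff relabel_Nil)
qed (simp add: relabel_Nil Nil_in_TV)

lemma relabel_inj: "length u = length w \<Longrightarrow> relabel L u = relabel L w \<Longrightarrow> u = w"
proof (induction u arbitrary: w rule: rev_induct)
  case (snoc c u)
  then obtain w' d where "w = w' @ [d]"
    by (cases w rule: rev_cases) auto
  with snoc show ?case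
    by (auto simp: relabel_snoc dest: label_inj)
qed simp

lemma relabel_surj: "y \<in> TV \<Longrightarrow> \<exists>v\<in>TV. relabel L v = y"
proof (induction y rule: rev_induct)
  case Nil
  then show ?case
    using relabel_Nil Nil_in_TV by metis
next
  case (snoc d y)
  then have y: "y \<in> TV" "y = [] \<or> last y \<noteq> d"
    by (simp_all add: snoc_in_TV_iff)
  obtain v where v: "v \<in> TV" "relabel L v = y"
    using snoc.IH y by blast
  obtain c where c: "L v c = d"
    using bij_label by (metis bij_pointE)
  have "v = [] \<or> last v \<noteq> c"
    using y v c last_relabel by (metis length_0_conv length_relabel)
  then have "v @ [c] \<in> TV"
    using v by (simp add: snoc_in_TV_iff)
  moreover have "relabel L (v @ [c]) = y @ [d]"
    using v c by (simp add: relabel_snoc)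
  ultimately show ?case
    by blast
qed

definition relabel_aut :: "'a list \<Rightarrow> 'a list" where
  "relabel_aut = restrict (relabel L) TV"

lemma relabel_aut_TAut: "relabel_aut \<in> TAut"
proof -
  have "bij_betw (relabel L) TV TV"
    unfolding bij_betw_def
  proof
    show "inj_on (relabel L) TV"
      using relabel_inj length_relabel by (metis inj_onI)
    show "relabel L ` TV = TV"
      using relabel_in_TV relabel_surj by blast
  qed
  then have "relabel_aut \<in> Bij TV"
    by (simp add: Bij_def relabel_aut_def bij_betw_cong[of TV "restrict (relabel L) TV" "relabel L"])
  moreover have "tadj (relabel L u) (relabel L w) \<longleftrightarrow> tadj u w" if "u \<in> TV" "w \<in> TV" for u w
  proof
    assume "tadj u w"
    then show "tadj (relabel L u) (relabel L w)"
      using that by (metis relabel_nbr relabel_in_TV tadj_iff_nbr)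
  next
    assume "tadj (relabel L u) (relabel L w)"
    then obtain b where b: "relabel L w = nbr (relabel L u) b"
      by (auto simp: tadj_iff_nbr)
    obtain a where "L u a = b"
      using bij_label by (metis bij_pointE)
    then have eq: "relabel L (nbr u a) = relabel L w"
      using b relabel_nbr[OF that(1)] by simp
    moreover have "length (nbr u a) = length w"
      using arg_cong[OF eq, of length] by (simp only: length_relabel)
    ultimately have "nbr u a = w"
      by (rule relabel_inj[rotated])
    then show "tadj u w"
      using tadj_nbr[OF that(1), of a] by simp
  qed
  ultimately show ?thesis
    by (simp add: TAut_def relabel_aut_def)
qed

lemma relabel_aut_Nil: "relabel_aut [] = []"
  by (simp add: relabel_aut_def relabel_Nil Nil_in_TV)

lemma locperm_relabel_aut: "v \<in> TV \<Longrightarrow> locperm relabel_aut v = L v"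
  by (simp add: locperm_def relabel_aut_def fun_eq_iff nbr_in_TV relabel_nbr ecol_nbr)

end

text \<open>The recursion runs over the reversed word, so that each step passes from \<open>v\<close> to \<open>v @ [c]\<close>.\<close>

fun labelling_rev :: "('a \<Rightarrow> 'a) set \<Rightarrow> ('a \<Rightarrow> 'a) \<Rightarrow> 'a list \<Rightarrow> 'a \<Rightarrow> 'a" where
  "labelling_rev F s [] = s"
| "labelling_rev F s (c # r) = (SOME f. f \<in> F \<and> f c = labelling_rev F s r c)"

definition transitive_labelling :: "('a \<Rightarrow> 'a) set \<Rightarrow> ('a \<Rightarrow> 'a) \<Rightarrow> 'a list \<Rightarrow> 'a \<Rightarrow> 'a" where
  "transitive_labelling F s v = labelling_rev F s (rev v)"

lemma transitive_labelling_Nil: "transitive_labelling F s [] = s"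
  by (simp add: transitive_labelling_def)

lemma transitive_labelling_snoc:
  assumes "transitive_on_Omega F"
  shows "transitive_labelling F s (v @ [c]) \<in> F"
    and "transitive_labelling F s (v @ [c]) c = transitive_labelling F s v c"
proof -
  have "\<exists>f. f \<in> F \<and> f c = transitive_labelling F s v c"
    using assms unfolding transitive_on_Omega_def by blast
  moreover have "transitive_labelling F s (v @ [c]) = (SOME f. f \<in> F \<and> f c = transitive_labelling F s v c)"
    by (simp add: transitive_labelling_def)
  ultimately show "transitive_labelling F s (v @ [c]) \<in> F"
    and "transitive_labelling F s (v @ [c]) c = transitive_labelling F s v c"
    by (metis (mono_tags, lifting) someI_ex)+
qed

lemma transitive_labelling_consistent:
  fixes F :: "('a::finite \<Rightarrow> 'a) set"
  assumes "transitive_on_Omega F" "subgroup F SymOmega" "bij s"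
  shows "consistent_labelling (transitive_labelling F s)"
proof
  show "bij (transitive_labelling F s v)" for v
    using assms transitive_labelling_snoc(1)[OF assms(1)] perm_subgroup_bij[OF assms(2)]
    by (cases v rule: rev_cases) (simp_all add: transitive_labelling_Nil)
  show "transitive_labelling F s (v @ [c]) c = transitive_labelling F s v c" for v c
    using transitive_labelling_snoc(2)[OF assms(1)] .
qed

definition root_extension :: "('a \<Rightarrow> 'a) set \<Rightarrow> ('a \<Rightarrow> 'a) \<Rightarrow> 'a list \<Rightarrow> 'a list" where
  "root_extension F s = restrict (relabel (transitive_labelling F s)) TV"

lemma root_extension:
  fixes F :: "('a::finite \<Rightarrow> 'a) set"
  assumes "transitive_on_Omega F" "subgroup F SymOmega" "bij s"
  shows "root_extension F s \<in> TAut"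
    and "root_extension F s [] = []"
    and "locperm (root_extension F s) [] = s"
    and "v \<in> TV \<Longrightarrow> v \<noteq> [] \<Longrightarrow> locperm (root_extension F s) v \<in> F"
proof -
  interpret consistent_labelling "transitive_labelling F s"
    using transitive_labelling_consistent[OF assms] .
  have ext: "root_extension F s = relabel_aut"
    by (simp add: root_extension_def relabel_aut_def)
  show "root_extension F s \<in> TAut" "root_extension F s [] = []"
    "locperm (root_extension F s) [] = s"
    by (simp_all add: ext relabel_aut_TAut relabel_aut_Nil locperm_relabel_aut Nil_in_TV
        transitive_labelling_Nil)
  assume "v \<in> TV" "v \<noteq> []"
  then show "locperm (root_extension F s) v \<in> F"
    using transitive_labelling_snoc(1)[OF assms(1)]
    by (cases v rule: rev_cases) (simp_all add: ext locperm_relabel_aut)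
qed

lemma root_extension_GFF:
  fixes F F' :: "('a::finite \<Rightarrow> 'a) set"
  assumes "transitive_on_Omega F" "subgroup F SymOmega" "subgroup F' SymOmega" "F \<subseteq> F'" "s \<in> F'"
  shows "root_extension F s \<in> GFF F F'"
proof -
  note ext = root_extension[OF assms(1,2) perm_subgroup_bij[OF assms(3,5)]]
  have "{v \<in> TV. locperm (root_extension F s) v \<notin> F} \<subseteq> {[]}"
    using ext(4) by blast
  moreover have "locperm (root_extension F s) v \<in> F'" if "v \<in> TV" for v
    using ext(3,4) assms(4,5) that by (cases "v = []") auto
  ultimately show ?thesis
    using ext(1) by (auto simp: GFF_iff defects_def intro: finite_subset)
qed

section \<open>Index two\<close>

locale GFF_pair =
  fixes F F' :: "('a::finite \<Rightarrow> 'a) set"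
  assumes F: "subgroup F SymOmega" and F': "subgroup F' SymOmega" and F_F': "F \<subseteq> F'"
begin

abbreviation G :: "('a list \<Rightarrow> 'a list) set" where
  "G \<equiv> GFF F F'"

abbreviation Gplus :: "('a list \<Rightarrow> 'a list) set" where
  "Gplus \<equiv> plus_sub (GFF F F')"

lemma G_subgroup: "subgroup G AutGroup_T"
  using GFF_subgroup[OF F F'] .

lemma G_TAut: "g \<in> G \<Longrightarrow> g \<in> TAut"
  by (simp add: GFF_iff)

lemma G_locperm: "g \<in> G \<Longrightarrow> v \<in> TV \<Longrightarrow> locperm g v \<in> F'"
  by (simp add: GFF_iff)

lemma G_subset_TAut: "G \<subseteq> TAut"
  using G_TAut by blast

lemma G_mult: "g \<in> G \<Longrightarrow> h \<in> G \<Longrightarrow> g \<star> h \<in> G"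
  using subgroup.m_closed[OF G_subgroup] by simp

lemma G_inv: "g \<in> G \<Longrightarrow> tinv g \<in> G"
  using subgroup.m_inv_closed[OF G_subgroup] by simp

lemma Gplus_subgroup: "subgroup Gplus AutGroup_T"
  using plus_sub_subgroup[OF G_subset_TAut] .

lemma Gplus_subset: "Gplus \<subseteq> G"
  using plus_sub_subset[OF G_subgroup] .

lemma Gplus_mult: "g \<in> Gplus \<Longrightarrow> h \<in> Gplus \<Longrightarrow> g \<star> h \<in> Gplus"
  using subgroup.m_closed[OF Gplus_subgroup] by simp

lemma Gplus_inv: "g \<in> Gplus \<Longrightarrow> tinv g \<in> Gplus"
  using subgroup.m_inv_closed[OF Gplus_subgroup] by simp

lemma Gplus_even_length: "h \<in> Gplus \<Longrightarrow> v \<in> TV \<Longrightarrow> even (length (h v)) \<longleftrightarrow> even (length v)"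
  using plus_sub_even_length[OF G_subset_TAut] .

lemma colour_preserving_G: "t \<in> colour_preserving \<Longrightarrow> t \<in> G"
  by (fact colour_preserving_GFF[OF _ perm_subgroup_id[OF F] perm_subgroup_id[OF F']])

lemma edge_flip_G: "edge_flip c \<in> G"
  using edge_flip_colour_preserving by (rule colour_preserving_G)

lemma vertex_stabilizers_reduce_to_root:
  assumes "g \<in> G" "u \<in> TV" "g u = u" and root: "\<And>g. g \<in> G \<Longrightarrow> g [] = [] \<Longrightarrow> g \<in> Gplus"
  shows "g \<in> Gplus"
proof -
  obtain t where t: "t \<in> colour_preserving" "t [] = u"
    using colour_preserving_moves_root[OF assms(2)] by blast
  then have tG: "t \<in> G" "t \<in> TAut"
    using colour_preserving_G G_TAut by auto
  have gT: "g \<in> TAut"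
    using G_TAut assms(1) .
  have "(tinv t \<star> g \<star> t) [] = tinv t (g (t []))"
    using gT tG(2) by (simp add: Aut_mult_apply TAut_in_TV Nil_in_TV)
  also have "\<dots> = []"
    using assms(3) t(2) tG(2) by (metis Aut_inv_apply Nil_in_TV)
  finally have "(tinv t \<star> g \<star> t) [] = []" .
  moreover have "tinv t \<star> g \<star> t \<in> G"
    by (intro G_mult G_inv tG(1) assms(1))
  ultimately have "tinv t \<star> g \<star> t \<in> Gplus"
    using root by blast
  then have "t \<star> (tinv t \<star> g \<star> t) \<star> tinv t \<in> Gplus"
    by (rule plus_sub_conj[OF G_subgroup tG(1)])
  also have "t \<star> (tinv t \<star> g \<star> t) \<star> tinv t = g"
    using tG(2) gT by (simp add: Aut.m_assoc flip: Aut.m_assoc[of t "tinv t"])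
  finally show ?thesis .
qed

context
  assumes transitive: "transitive_on_Omega F"
begin

lemma root_extension_G: "s \<in> F' \<Longrightarrow> root_extension F s \<in> G"
  using root_extension_GFF[OF transitive F F' F_F'] .

lemma root_extension_props:
  assumes "s \<in> F'"
  shows "root_extension F s \<in> TAut" "root_extension F s [] = []" "locperm (root_extension F s) [] = s"
  using root_extension(1-3)[OF transitive F perm_subgroup_bij[OF F' assms]] .

lemma root_extension_Gplus:
  assumes "s \<in> F'" "s x = x"
  shows "root_extension F s \<in> Gplus"
proof -
  note ext = root_extension_props[OF assms(1)]
  have "root_extension F s [x] = [x]"
    using TAut_nbr[OF ext(1) Nil_in_TV, of x] ext(2,3) assms(2) by (simp add: Nil_nbr)
  moreover have "tadj [] [x]"
    using tadj_nbr[OF Nil_in_TV, of x] by (simp add: Nil_nbr)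
  ultimately show ?thesis
    using edge_stabilizer_in_plus_sub root_extension_G[OF assms(1)] ext(2) by blast
qed

lemma exists_stabilizer_moving_nbr:
  assumes u: "u \<in> TV"
  shows "\<exists>h\<in>G. h u = u \<and> h (nbr u e) = nbr u c"
proof -
  obtain t where t: "t \<in> colour_preserving" "t [] = u"
    using colour_preserving_moves_root[OF u] by blast
  then have tG: "t \<in> G" "t \<in> TAut"
    using colour_preserving_G G_TAut by auto
  obtain f where f: "f \<in> F" "f e = c"
    using transitive by (auto simp: transitive_on_Omega_def)
  then have fF': "f \<in> F'"
    using F_F' by blast
  note ext = root_extension_props[OF fF']
  let ?h = "t \<star> root_extension F f \<star> tinv t"
  have hG: "?h \<in> G"
    by (intro G_mult G_inv tG(1) root_extension_G fF')
  have tinv_u: "tinv t u = []"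
    using t(2) tG(2) by (metis Aut_inv_apply Nil_in_TV)
  have hu: "?h u = u"
    using u t(2) tG(2) ext(1,2) tinv_u by (simp add: Aut_mult_apply Aut_inv_in_TV Nil_in_TV)
  have "locperm ?h u = locperm t [] \<circ> f \<circ> inv_into UNIV (locperm t [])"
    using u tG(2) ext tinv_u
    by (simp add: locperm_mult locperm_inv Aut_mult_apply Aut_inv_in_TV Nil_in_TV)
  also have "\<dots> = f"
    using colour_preserving_locperm[OF t(1) Nil_in_TV] by simp
  finally have "?h (nbr u e) = nbr u c"
    using TAut_nbr[of ?h u e] hu f(2) u tG(2) ext(1) by simp
  with hG hu show ?thesis
    by blast
qed

context
  assumes generated: "gen_by_point_stabilizers F'"
begin

lemma exists_Gplus_root_locperm:
  assumes "s \<in> F'"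
  shows "\<exists>k\<in>Gplus. k [] = [] \<and> locperm k [] = s"
proof -
  define R where "R = {locperm k [] | k. k \<in> Gplus \<and> k [] = []}"
  have "f \<in> R" if "f \<in> F'" "f x = x" for f x
    using root_extension_Gplus[OF that] root_extension_props[OF that(1)]
    by (auto simp: R_def intro!: exI[of _ "root_extension F f"])
  then have "generate SymOmega (\<Union>x. {f \<in> F'. f x = x}) \<subseteq> R"
    unfolding R_def by (intro Sym.generate_subgroup_incl root_locperms_subgroup Gplus_subgroup) blast
  then have "s \<in> R"
    using assms generated unfolding gen_by_point_stabilizers_def by blast
  then show ?thesis
    by (auto simp: R_def)
qed

lemma root_stabilizer_in_Gplus:
  assumes g: "g \<in> G" and g_root: "g [] = []"
  shows "g \<in> Gplus"
proof -
  have gT: "g \<in> TAut"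
    using g G_TAut by blast
  obtain k where k: "k \<in> Gplus" "k [] = []" "locperm k [] = locperm g []"
    using exists_Gplus_root_locperm g Nil_in_TV by (metis GFF_iff)
  then have kT: "k \<in> TAut"
    using Gplus_subset G_TAut by blast
  have k_inv_root: "tinv k [] = []"
    using k(2) kT by (metis Aut_inv_apply Nil_in_TV)
  let ?h = "tinv k \<star> g"
  have h_root: "?h [] = []"
    using gT kT g_root k_inv_root by (simp add: Aut_mult_apply Nil_in_TV)
  have "locperm ?h [] = inv_into UNIV (locperm k []) \<circ> locperm k []"
    using gT kT g_root k k_inv_root by (simp add: locperm_mult locperm_inv Nil_in_TV)
  also have "\<dots> = id"
    using bij_locperm[OF kT Nil_in_TV] by (simp add: bij_is_inj)
  finally have "?h [x] = [x]" for x
    using TAut_nbr[of ?h "[]" x] gT kT h_root by (simp add: Nil_nbr Nil_in_TV)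
  moreover have "?h \<in> G"
    using Gplus_subset k(1) by (intro G_mult G_inv g) blast
  ultimately have "?h \<in> Gplus"
    using edge_stabilizer_in_plus_sub h_root tadj_nbr[OF Nil_in_TV] by (metis Nil_nbr)
  then have "k \<star> ?h \<in> Gplus"
    using Gplus_mult k(1) by blast
  also have "k \<star> ?h = g"
    using gT kT by (simp flip: Aut.m_assoc)
  finally show ?thesis .
qed

lemma vertex_stabilizer_in_Gplus: "g \<in> G \<Longrightarrow> u \<in> TV \<Longrightarrow> g u = u \<Longrightarrow> g \<in> Gplus"
  using vertex_stabilizers_reduce_to_root root_stabilizer_in_Gplus by blast

text \<open>Descent: a stabilizer of the next-to-last vertex on the path from the root to \<open>g []\<close> moves
  \<open>g []\<close> two steps closer to the root.\<close>

lemma even_root_image_in_Gplus: "g \<in> G \<Longrightarrow> even (length (g [])) \<Longrightarrow> g \<in> Gplus"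
proof (induction "length (g [])" arbitrary: g rule: less_induct)
  case less
  then have g: "g \<in> G" "g \<in> TAut" and g_root: "g [] \<in> TV"
    using G_TAut TAut_in_TV Nil_in_TV by blast+
  show ?case
  proof (cases "g [] = []")
    case True
    then show ?thesis
      using root_stabilizer_in_Gplus g by blast
  next
    case False
    then obtain x c e where root_image: "g [] = x @ [c, e]"
      using less.prems(2) by (cases "g []" rule: rev_cases; cases "butlast (g [])" rule: rev_cases) auto
    let ?u = "x @ [c]"
    have "?u @ [e] \<in> TV"
      using g_root root_image by simp
    then have u: "?u \<in> TV" "nbr ?u e = g []" "nbr ?u c = x"
      unfolding snoc_in_TV_iff using root_image by (simp_all add: nbr_snoc nbr_eq_snoc)
    obtain h where h: "h \<in> G" "h ?u = ?u" "h (nbr ?u e) = nbr ?u c"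
      using exists_stabilizer_moving_nbr[OF u(1)] by blast
    then have h_Gplus: "h \<in> Gplus" and hT: "h \<in> TAut"
      using vertex_stabilizer_in_Gplus u(1) G_TAut by blast+
    have "(h \<star> g) [] = x"
      using Aut_mult_apply[OF hT g(2) Nil_in_TV] h(3) u(2,3) by simp
    then have "h \<star> g \<in> Gplus"
      using less.hyps G_mult h(1) g(1) less.prems(2) root_image by simp
    then have "tinv h \<star> (h \<star> g) \<in> Gplus"
      using Gplus_mult Gplus_inv h_Gplus by blast
    also have "tinv h \<star> (h \<star> g) = g"
      using hT g(2) by (simp flip: Aut.m_assoc)
    finally show ?thesis .
  qed
qed

lemma Gplus_eq_star_sub: "Gplus = star_sub G"
proof
  show "Gplus \<subseteq> star_sub G"
    using Gplus_subset Gplus_even_length by (auto simp: star_sub_def)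
  show "star_sub G \<subseteq> Gplus"
    using even_root_image_in_Gplus Nil_in_TV by (auto simp: star_sub_def)
qed

lemma coset_Gplus_cases:
  assumes g: "g \<in> G"
  shows "Gplus #>\<^bsub>AutGroup_T\<^esub> g \<in> {Gplus, Gplus #>\<^bsub>AutGroup_T\<^esub> edge_flip a}"
proof (cases "even (length (g []))")
  case True
  then have "g \<in> Gplus"
    using even_root_image_in_Gplus g by blast
  then show ?thesis
    using Aut.coset_join2[OF _ Gplus_subgroup] G_TAut[OF g] by simp
next
  case False
  let ?t = "edge_flip a"
  have gT: "g \<in> TAut" and tT: "?t \<in> TAut"
    using G_TAut[OF g] edge_flip_TAut .
  have "?t [a] = []"
    by (simp add: edge_flip_apply flip_word_def mem_TV_iff)
  then have "tinv ?t [] = [a]"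
    using tT by (metis Aut_inv_apply mem_TV_iff successively.simps(2))
  then have "(g \<star> tinv ?t) [] = g [a]"
    using Aut_mult_apply[OF gT tinv_TAut[OF tT] Nil_in_TV] by simp
  moreover have "even (length (g [a]))"
    using even_length_aut[OF gT, of "[a]"] False by (simp add: mem_TV_iff)
  ultimately have "g \<star> tinv ?t \<in> Gplus"
    using even_root_image_in_Gplus G_mult G_inv g edge_flip_G by simp
  then have "g \<star> tinv ?t \<star> ?t \<in> Gplus #>\<^bsub>AutGroup_T\<^esub> ?t"
    using Gplus_subset G_TAut tT by (intro Aut.rcosI) auto
  also have "g \<star> tinv ?t \<star> ?t = g"
    using gT tT by (simp add: Aut.m_assoc)
  finally show ?thesis
    using Aut.repr_independence[OF _ _ Gplus_subgroup] tT by simp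
qed

lemma card_rcosets_Gplus: "card (rcosets\<^bsub>GFF_group F F'\<^esub> Gplus) = 2"
proof -
  fix a :: 'a
  have "Gplus \<in> (\<lambda>g. Gplus #>\<^bsub>AutGroup_T\<^esub> g) ` G"
    using Aut.coset_join2[OF _ Gplus_subgroup] subgroup.one_closed[OF Gplus_subgroup]
      subgroup.one_closed[OF G_subgroup] by force
  then have "rcosets\<^bsub>GFF_group F F'\<^esub> Gplus = {Gplus, Gplus #>\<^bsub>AutGroup_T\<^esub> edge_flip a}"
    using coset_Gplus_cases edge_flip_G by (auto simp: rcosets_GFF_group)
  moreover have "edge_flip a \<notin> Gplus"
    using Gplus_even_length[of "edge_flip a" "[]"] Nil_in_TV by (auto simp: edge_flip_Nil)
  then have "Gplus \<noteq> Gplus #>\<^bsub>AutGroup_T\<^esub> edge_flip a"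
    using Aut.rcos_self[OF _ Gplus_subgroup, of "edge_flip a"] edge_flip_TAut by force
  ultimately show ?thesis
    by simp
qed
end

end

end

section \<open>Infinite index\<close>

definition point_stabilizer_span :: "('a \<Rightarrow> 'a) set \<Rightarrow> ('a \<Rightarrow> 'a) set" where
  "point_stabilizer_span F' = generate SymOmega (\<Union>x. {f \<in> F'. f x = x})"

lemma orbit_of_closed:
  assumes P: "subgroup P SymOmega" and p: "p \<in> P"
  shows "p c \<in> orbit_of P a \<longleftrightarrow> c \<in> orbit_of P a"
proof
  assume "c \<in> orbit_of P a"
  then obtain q where "q \<in> P" "c = q a"
    by (auto simp: orbit_of_def)
  then show "p c \<in> orbit_of P a"
    unfolding orbit_of_def using perm_subgroup_comp[OF P p] by (auto intro!: image_eqI[where x = "p \<circ> q"])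
next
  assume "p c \<in> orbit_of P a"
  then obtain q where q: "q \<in> P" "p c = q a"
    by (auto simp: orbit_of_def)
  have "(inv_into UNIV p \<circ> q) a = c"
    using q(2) perm_subgroup_bij[OF P p] by (metis bij_is_inj comp_apply inv_into_f_f UNIV_I)
  then show "c \<in> orbit_of P a"
    unfolding orbit_of_def using perm_subgroup_comp[OF P perm_subgroup_inv[OF P p] q(1)]
    by (auto intro!: image_eqI[where x = "inv_into UNIV p \<circ> q"])
qed

context
  fixes F' :: "('a \<Rightarrow> 'a) set"
  assumes F': "subgroup F' SymOmega"
begin

lemma point_stabilizer_span_subgroup: "subgroup (point_stabilizer_span F') SymOmega"
  unfolding point_stabilizer_span_def
  using subgroup.subset[OF F'] by (intro Sym.generate_is_subgroup) blast

lemma point_stabilizer_span_subset: "point_stabilizer_span F' \<subseteq> F'"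
  unfolding point_stabilizer_span_def by (rule Sym.generate_subgroup_incl[OF _ F']) blast

lemma point_stabilizer_in_span: "f \<in> F' \<Longrightarrow> f x = x \<Longrightarrow> f \<in> point_stabilizer_span F'"
  unfolding point_stabilizer_span_def by (rule generate.incl) blast

lemma point_stabilizer_span_cong:
  assumes p: "p \<in> point_stabilizer_span F'" and q: "q \<in> F'" and "p x = q x"
  shows "q \<in> point_stabilizer_span F'"
proof -
  note span = point_stabilizer_span_subgroup
  have pF': "p \<in> F'" and bp: "bij p"
    using p point_stabilizer_span_subset perm_subgroup_bij[OF F'] by blast+
  have "(inv_into UNIV p \<circ> q) x = x"
    using \<open>p x = q x\<close> bp by (metis bij_is_inj comp_apply inv_into_f_f UNIV_I)
  then have "inv_into UNIV p \<circ> q \<in> point_stabilizer_span F'"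
    using point_stabilizer_in_span perm_subgroup_comp[OF F' perm_subgroup_inv[OF F' pF'] q] by blast
  then have "p \<circ> (inv_into UNIV p \<circ> q) \<in> point_stabilizer_span F'"
    using perm_subgroup_comp[OF span p] by blast
  moreover have "p \<circ> (inv_into UNIV p \<circ> q) = q"
    using bp by (simp add: fun_eq_iff bij_is_surj f_inv_into_f)
  ultimately show ?thesis
    by simp
qed

lemma point_stabilizer_span_intransitive:
  assumes hat: "F' \<subseteq> hat F" and F: "subgroup F SymOmega"
    and not_iii: "\<not> (transitive_on_Omega F \<and> gen_by_point_stabilizers F')"
  obtains a b where "b \<notin> orbit_of (point_stabilizer_span F') a"
proof (cases "transitive_on_Omega F")
  case False
  then obtain a b where ab: "\<forall>f\<in>F. f a \<noteq> b"
    by (auto simp: transitive_on_Omega_def)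
  have "p a \<in> orbit_of F a" if "p \<in> point_stabilizer_span F'" for p
  proof -
    have "p \<in> hat F"
      using that point_stabilizer_span_subset hat by blast
    moreover have "a \<in> orbit_of F a"
      unfolding orbit_of_def using perm_subgroup_id[OF F] by (auto intro!: image_eqI[where x = id])
    ultimately show ?thesis
      by (auto simp: hat_def)
  qed
  with ab have "b \<notin> orbit_of (point_stabilizer_span F') a"
    by (fastforce simp: orbit_of_def)
  then show ?thesis
    by (rule that)
next
  case True
  then have "F' \<noteq> point_stabilizer_span F'"
    using not_iii by (simp add: gen_by_point_stabilizers_def point_stabilizer_span_def)
  show ?thesis
  proof (rule ccontr)
    assume "\<not> ?thesis"
    then have "b \<in> orbit_of (point_stabilizer_span F') a" for a b
      using that by blast
    then have "\<exists>p\<in>point_stabilizer_span F'. p a = b" for a b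
      unfolding orbit_of_def by (metis imageE)
    then have "q \<in> point_stabilizer_span F'" if "q \<in> F'" for q
      using point_stabilizer_span_cong that by metis
    then show False
      using \<open>F' \<noteq> point_stabilizer_span F'\<close> point_stabilizer_span_subset by blast
  qed
qed

text \<open>At the two ends of an edge of colour \<open>c\<close> the local permutations agree on \<open>c\<close>, so they
  lie in the same coset of the span; at the fixed edge this coset is the span itself.\<close>

lemma edge_stabilizer_locperm_in_span:
  assumes g: "g \<in> TAut" "\<And>v. v \<in> TV \<Longrightarrow> locperm g v \<in> F'"
    and uw: "tadj u w" "g u = u" "g w = w" and v: "v \<in> TV"
  shows "locperm g v \<in> point_stabilizer_span F'"
proof -
  have u: "u \<in> TV"
    using uw(1) by (simp add: tadj_def)
  show ?thesis
    using u v
  proof (rule TV_induct)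
    have "locperm g u (ecol u w) = ecol u w"
      using uw by (simp add: locperm_def nbr_ecol)
    then show "locperm g u \<in> point_stabilizer_span F'"
      using point_stabilizer_in_span g(2)[OF u] by blast
  next
    fix v c
    assume "v \<in> TV" "locperm g v \<in> point_stabilizer_span F'"
    then show "locperm g (nbr v c) \<in> point_stabilizer_span F'"
      using point_stabilizer_span_cong g(2)[OF nbr_in_TV] locperm_nbr_colour[OF g(1)] by metis
  qed
qed

end

text \<open>\<open>height A\<close> folds the tree onto the line \<open>\<int>\<close>, whose edge \<open>{n, n + 1}\<close> counts as coloured in \<open>A\<close>
  iff \<open>n\<close> is even.\<close>

definition height_step :: "int \<Rightarrow> bool \<Rightarrow> int" where
  "height_step n in_A = (if even n = in_A then n + 1 else n - 1)"

definition height :: "'a set \<Rightarrow> 'a list \<Rightarrow> int" where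
  "height A v = foldl (\<lambda>n c. height_step n (c \<in> A)) 0 v"

lemma height_step_height_step: "height_step (height_step n b) b = n"
  by (simp add: height_step_def)

lemma height_snoc: "height A (v @ [c]) = height_step (height A v) (c \<in> A)"
  by (simp add: height_def)

lemma height_nbr: "v \<in> TV \<Longrightarrow> height A (nbr v c) = height_step (height A v) (c \<in> A)"
  by (cases v c rule: nbr_cases) (simp_all add: height_snoc height_step_height_step)

lemma height_aut_fixpoint:
  assumes g: "g \<in> TAut" and u: "u \<in> TV" "g u = u"
    and A: "\<And>w c. w \<in> TV \<Longrightarrow> locperm g w c \<in> A \<longleftrightarrow> c \<in> A" and v: "v \<in> TV"
  shows "height A (g v) = height A v"
  using u(1) v
proof (rule TV_induct)
  fix v c
  assume "v \<in> TV" "height A (g v) = height A v"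
  then show "height A (g (nbr v c)) = height A (nbr v c)"
    by (simp add: TAut_nbr[OF g] height_nbr TAut_in_TV[OF g] A)
qed (simp add: u(2))

definition word :: "'a \<Rightarrow> 'a \<Rightarrow> nat \<Rightarrow> 'a list" where
  "word a b n = concat (replicate n [a, b])"

lemma word_Suc: "word a b (Suc n) = a # b # word a b n"
  by (simp add: word_def)

lemma height_word: "a \<in> A \<Longrightarrow> b \<notin> A \<Longrightarrow> height A (word a b n) = 2 * int n"
proof (induction n)
  case (Suc n)
  have "word a b (Suc n) = (word a b n @ [a]) @ [b]"
    by (simp add: word_def replicate_append_same[symmetric])
  then show ?case
    using Suc by (simp only: height_snoc) (simp add: height_step_def)
qed (simp add: word_def height_def)

definition translation :: "'a \<Rightarrow> 'a \<Rightarrow> nat \<Rightarrow> 'a list \<Rightarrow> 'a list" where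
  "translation a b n = (edge_flip a \<star> edge_flip b) [^]\<^bsub>AutGroup_T\<^esub> n"

lemma translation_colour_preserving: "translation a b n \<in> colour_preserving"
proof (induction n)
  case 0
  then show ?case
    by (simp add: translation_def colour_preserving_def locperm_one)
next
  case (Suc n)
  then show ?case
    unfolding translation_def
    by (simp add: colour_preserving_mult edge_flip_colour_preserving)
qed

lemma translation_Nil: "a \<noteq> b \<Longrightarrow> translation a b n [] = word a b n"
proof (induction n)
  case 0
  then show ?case
    by (simp add: translation_def word_def one_Aut_apply Nil_in_TV)
next
  case (Suc n)
  let ?w = "word a b n"
  have "translation a b n \<in> TAut"
    using translation_colour_preserving by (rule colour_preserving_TAut)
  then have "?w \<in> TV"
    using Suc TAut_in_TV Nil_in_TV by metis
  moreover have "?w = [] \<or> hd ?w = a"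
    by (cases n) (simp_all add: word_Suc word_def)
  ultimately have w: "?w \<in> TV" "?w = [] \<or> hd ?w = a"
    by blast+
  then have flips: "flip_word b ?w = b # ?w" "flip_word a (b # ?w) = a # b # ?w"
    using Suc.prems by (auto simp: flip_word_def)
  have "translation a b (Suc n) = edge_flip a \<star> edge_flip b \<star> translation a b n"
    unfolding translation_def by (subst Aut.nat_pow_Suc2) (simp_all add: edge_flip_TAut)
  then have "translation a b (Suc n) [] = edge_flip a (edge_flip b ?w)"
    using Suc \<open>translation a b n \<in> TAut\<close> w(1)
    by (simp add: Aut_mult_apply TAut_in_TV Nil_in_TV edge_flip_TAut)
  moreover have "b # ?w \<in> TV"
    using flip_word_in_TV[OF w(1), of b] flips(1) by simp
  ultimately show ?case
    using w(1) flips by (simp add: edge_flip_apply word_Suc)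
qed

context GFF_pair
begin

lemma Gplus_preserves_height:
  assumes A: "\<And>p c. p \<in> point_stabilizer_span F' \<Longrightarrow> p c \<in> A \<longleftrightarrow> c \<in> A"
    and h: "h \<in> Gplus" and v: "v \<in> TV"
  shows "height A (h v) = height A v"
proof -
  have "height A (g v) = height A v" if g_edge: "g \<in> edge_stabilizers G" and v: "v \<in> TV" for g v
  proof -
    obtain u w where g: "g \<in> G" "tadj u w" "g u = u" "g w = w"
      using g_edge by (auto simp: edge_stabilizers_def)
    have "locperm g x c \<in> A \<longleftrightarrow> c \<in> A" if "x \<in> TV" for x c
      using edge_stabilizer_locperm_in_span[OF F' G_TAut[OF g(1)] G_locperm[OF g(1)] g(2-4) that] A
      by blast
    moreover have "u \<in> TV"
      using g(2) by (simp add: tadj_def)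
    ultimately show ?thesis
      using height_aut_fixpoint[OF G_TAut[OF g(1)] _ g(3) _ v] by blast
  qed
  then show ?thesis
    using plus_sub_preserves[OF G_subset_TAut _ h v] by blast
qed

lemma infinite_rcosets_Gplus:
  assumes b: "b \<notin> orbit_of (point_stabilizer_span F') a"
  shows "infinite (rcosets\<^bsub>GFF_group F F'\<^esub> Gplus)"
proof -
  define A where "A = orbit_of (point_stabilizer_span F') a"
  note span = point_stabilizer_span_subgroup[OF F']
  have "a \<in> A"
    unfolding A_def orbit_of_def using perm_subgroup_id[OF span] by (auto intro!: image_eqI[where x = id])
  moreover have "b \<notin> A"
    using b by (simp add: A_def)
  ultimately have ab: "a \<in> A" "b \<notin> A" "a \<noteq> b"
    by auto
  have A_inv: "p c \<in> A \<longleftrightarrow> c \<in> A" if "p \<in> point_stabilizer_span F'" for p c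
    unfolding A_def using that by (rule orbit_of_closed[OF span])
  have height_Gplus: "height A (h v) = height A v" if "h \<in> Gplus" "v \<in> TV" for h v
    by (rule Gplus_preserves_height[OF _ that]) (rule A_inv)
  have translation_G: "translation a b n \<in> G" "translation a b n \<in> TAut" for n
    using translation_colour_preserving by (rule colour_preserving_G, rule colour_preserving_TAut)
  define coset where "coset n = Gplus #>\<^bsub>AutGroup_T\<^esub> translation a b n" for n
  have "inj coset"
  proof (rule injI)
    fix m n
    assume "coset m = coset n"
    then have "translation a b n \<in> Gplus #>\<^bsub>AutGroup_T\<^esub> translation a b m"
      using Aut.rcos_self[OF _ Gplus_subgroup] translation_G by (simp add: coset_def)
    then obtain h where h: "h \<in> Gplus" "translation a b n = h \<star> translation a b m"
      by (auto simp: r_coset_def)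
    moreover have "h \<in> TAut"
      using h(1) Gplus_subset G_TAut by blast
    ultimately have "translation a b n [] = h (translation a b m [])"
      using Aut_mult_apply[OF _ translation_G(2) Nil_in_TV] by simp
    then have "height A (word a b n) = height A (word a b m)"
      using height_Gplus[OF h(1) TAut_in_TV[OF translation_G(2) Nil_in_TV]] translation_Nil[OF ab(3)]
      by simp
    then show "m = n"
      using height_word[OF ab(1,2)] by simp
  qed
  moreover have "range coset \<subseteq> rcosets\<^bsub>GFF_group F F'\<^esub> Gplus"
    using translation_G by (auto simp: rcosets_GFF_group coset_def)
  ultimately show ?thesis
    using finite_imageD finite_subset infinite_UNIV_nat by blast
qed

end

theorem mainTheorem16:
  fixes F F' :: "('a::finite \<Rightarrow> 'a) set"
  assumes "card (UNIV :: 'a set) \<ge> 3"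
    and "subgroup F SymOmega" and "subgroup F' SymOmega"
    and "F \<subseteq> F'" and "F' \<subseteq> hat F"
  shows "((card (rcosets\<^bsub>GFF_group F F'\<^esub> (plus_sub (GFF F F'))) = 2
            \<and> plus_sub (GFF F F') = star_sub (GFF F F'))
           \<longleftrightarrow> finite (rcosets\<^bsub>GFF_group F F'\<^esub> (plus_sub (GFF F F'))))
       \<and> (finite (rcosets\<^bsub>GFF_group F F'\<^esub> (plus_sub (GFF F F')))
           \<longleftrightarrow> (transitive_on_Omega F \<and> gen_by_point_stabilizers F'))"
proof -
  interpret GFF_pair F F'
    using assms(2-4) by (rule GFF_pair.intro)
  show ?thesis
  proof (cases "transitive_on_Omega F \<and> gen_by_point_stabilizers F'")
    case True
    then have "card (rcosets\<^bsub>GFF_group F F'\<^esub> Gplus) = 2" "Gplus = star_sub G"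
      using card_rcosets_Gplus Gplus_eq_star_sub by blast+
    with True show ?thesis
      using card.infinite by fastforce
  next
    case False
    then obtain a b where "b \<notin> orbit_of (point_stabilizer_span F') a"
      using point_stabilizer_span_intransitive[OF assms(3,5,2)] by blast
    then have "infinite (rcosets\<^bsub>GFF_group F F'\<^esub> Gplus)"
      by (rule infinite_rcosets_Gplus)
    with False show ?thesis
      by simp
  qed
qed

end
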